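(* Let $T>0$, $\Omega\subset\mathbb{R}^d$ a bounded domain, $\mathcal{S}=\mathrm{span}\{\psi_1,\ldots,\psi_s\}\subset L^2(0,T)$ a nodal basis with $\psi_1$ the nodal function associated with $t=0$ (so $\psi_1(0)=1$, $\psi_j(0)=0$ for $j\geq 2$), and $\mathcal{Y}=\mathrm{span}\{\nu_1,\ldots,\nu_q\}\subset L^2(\Omega)$. Let $\mathbf{M}_{\mathcal{S}}=\mathbf{L}_{\mathcal{S}}\mathbf{L}_{\mathcal{S}}^T$ with $\mathbf{L}_{\mathcal{S}}$ an invertible upper-triangular factor and $\mathbf{M}_{\mathcal{Y}}=\mathbf{L}_{\mathcal{Y}}\mathbf{L}_{\mathcal{Y}}^T$. Let $\mathbf{X}_{\mathscr{S}\cdot\mathcal{Y}}$ be the coefficient matrix of a function in $\mathscr{S}\cdot\mathcal{Y}$, let $\hat{\mathcal{S}}$ be the reduced time space of dimension $\hat s\geq 2$ constructed (as described in the context) from $\mathbf{X}_{\mathscr{S}\cdot\mathcal{Y}}$, and let $\mathbf{X}_{\hat{\mathscr{S}}\cdot\mathcal{Y}}$ be the coefficient matrix (with respect to the basis $\{\psi_j\nu_i\}$) of the projection of this function onto $\hat{\mathscr{S}}\cdot\mathcal{Y}$. Let $\mathring{\mathbf{X}}_{\mathscr{S}\cdot\mathcal{Y}}$ and $\mathring{\mathbf{X}}_{\hat{\mathscr{S}}\cdot\mathcal{Y}}$ result from setting the first column of $\mathbf{X}_{\mathscr{S}\cdot\mathcal{Y}}$ and $\mathbf{X}_{\hat{\mathscr{S}}\cdot\mathcal{Y}}$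 to zero. Then $$\mathring{\mathbf{X}}_{\hat{\mathscr{S}}\cdot\mathcal{Y}}=\mathring{\mathbf{X}}_{\mathscr{S}\cdot\mathcal{Y}}\mathbf{L}_{\mathcal{S}}\mathring{U}_{\hat s-1}\mathring{U}_{\hat s-1}^T\mathbf{L}_{\mathcal{S}}^{-1},$$ where the columns of $\mathring{U}_{\hat s-1}$ are the $\hat s-1$ leading right singular vectors of $\mathbf{L}_{\mathcal{Y}}^T\mathring{\mathbf{X}}_{\mathscr{S}\cdot\mathcal{Y}}\mathbf{L}_{\mathcal{S}}$.
   Context: $\mathcal{S}\cdot\mathcal{Y}$ is the span of the products $\psi_j\nu_i$; each element is $x=\sum_{j,i}\mathbf{x}_{i,j}\nu_i\psi_j$ with coefficient matrix $\mathbf{X}=[\mathbf{x}_{i,j}]\in\mathbb{R}^{q\times s}$. Inner product $(x_1,x_2)_{\mathcal{S}\cdot\mathcal{Y}}=\int_0^T\int_\Omega x_1x_2$. Gramians: $\mathbf{M}_{\mathcal{S}}=[(\psi_i,\psi_j)_{L^2(0,T)}]$, $\mathbf{M}_{\mathcal{Y}}=[(\nu_i,\nu_j)_{L^2(\Omega)}]$. For $x_0$ given, $\Pi_{\mathcal{Y}}$ is the $L^2(\Omega)$-orthogonal projection onto $\mathcal{Y}$ and $\mathscr{S}\cdot\mathcal{Y}=\{x\in\mathcal{S}\cdot\mathcal{Y}: x(0)=\Pi_{\mathcal{Y}}x_0\}$. Construction of the initial-condition-adapted reduced time space from a coefficient matrix $\mathbf{Z}\in\mathbb{R}^{q\times s}$: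 let $\mathring{\mathbf{Z}}$ be $\mathbf{Z}$ with its first column set to zero; let $\mathring{U}_{\hat s-1}$ be the matrix of the $\hat s-1$ leading right singular vectors of $\mathbf{L}_{\mathcal{Y}}^T\mathring{\mathbf{Z}}\mathbf{L}_{\mathcal{S}}$; set $U_{\hat s}=[(\mathbf{L}_{\mathcal{S}}^T)_{:,1}\;\mathring{U}_{\hat s-1}]\in\mathbb{R}^{s\times\hat s}$, where $(\mathbf{L}_{\mathcal{S}}^T)_{:,1}$ is the first column of $\mathbf{L}_{\mathcal{S}}^T$; define $[\hat\psi_1,\ldots,\hat\psi_{\hat s}]^T=U_{\hat s}^T\mathbf{L}_{\mathcal{S}}^{-1}[\psi_1,\ldots,\psi_s]^T$ and $\hat{\mathcal{S}}=\mathrm{span}\{\hat\psi_1,\ldots,\hat\psi_{\hat s}\}$ (so $\hat\psi_1=\psi_1$ and $\hat\psi_j(0)=0$ for $j\ge 2$). $\hat{\mathcal{S}}\cdot\mathcal{Y}$ is the span of $\hat\psi_j\nu_i$ and $\hat{\mathscr{S}}\cdot\mathcal{Y}=\{\hat x\in\hat{\mathcal{S}}\cdot\mathcal{Y}:\hat x(0)=\Pi_{\mathcal{Y}}x_0\}$; the projection onto it is the $(\cdot,\cdot)_{\mathcal{S}\cdot\mathcal{Y}}$-orthogonal projection onto $\hat{\mathcal{S}}\cdot\mathcal{Y}$. *)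

theory Defs
  imports "HOL-Analysis.Analysis" "Jordan_Normal_Form.Matrix"
begin

text \<open>Matrices are Jordan_Normal_Form matrices; all indices are 0-based, so the paper's
  \<open>\<psi>_1\<close> is \<open>\<psi> 0\<close>, the paper's "first column" is column 0, etc.\<close>

definition inv_m :: "real mat \<Rightarrow> real mat" where
  "inv_m A = (SOME B. B \<in> carrier_mat (dim_row A) (dim_row A) \<and>
                      A * B = 1\<^sub>m (dim_row A) \<and> B * A = 1\<^sub>m (dim_row A))"

definition orthonormal_cols :: "real mat \<Rightarrow> bool" where
  "orthonormal_cols V \<longleftrightarrow> transpose_mat V * V = 1\<^sub>m (dim_col V)"

definition is_svd :: "real mat \<Rightarrow> real mat \<Rightarrow> real mat \<Rightarrow> real mat \<Rightarrow> bool" where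
  "is_svd W P Sig V \<longleftrightarrow>
     P \<in> carrier_mat (dim_row W) (dim_row W) \<and> orthonormal_cols P \<and>
     V \<in> carrier_mat (dim_col W) (dim_col W) \<and> orthonormal_cols V \<and>
     Sig \<in> carrier_mat (dim_row W) (dim_col W) \<and>
     (\<forall>i<dim_row W. \<forall>j<dim_col W. i \<noteq> j \<longrightarrow> Sig $$ (i,j) = 0) \<and>
     (\<forall>i<min (dim_row W) (dim_col W). Sig $$ (i,i) \<ge> 0) \<and>
     (\<forall>i j. i \<le> j \<longrightarrow> j < min (dim_row W) (dim_col W) \<longrightarrow> Sig $$ (j,j) \<le> Sig $$ (i,i)) \<and>
     W = P * Sig * transpose_mat V"

definition lead_cols :: "nat \<Rightarrow> real mat \<Rightarrow> real mat" where
  "lead_cols k V = mat (dim_row V) k (\<lambda>(i,j). V $$ (i,j))"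

definition ring :: "real mat \<Rightarrow> real mat" where
  "ring X = mat (dim_row X) (dim_col X) (\<lambda>(i,j). if j = 0 then 0 else X $$ (i,j))"

definition stfun :: "(nat \<Rightarrow> real \<Rightarrow> real) \<Rightarrow> (nat \<Rightarrow> 'a \<Rightarrow> real) \<Rightarrow> real mat \<Rightarrow> real \<Rightarrow> 'a \<Rightarrow> real" where
  "stfun \<psi> \<nu> X t y = (\<Sum>i<dim_row X. \<Sum>j<dim_col X. X $$ (i,j) * \<nu> i y * \<psi> j t)"

definition st_inner :: "real \<Rightarrow> 'a::euclidean_space set \<Rightarrow> (real \<Rightarrow> 'a \<Rightarrow> real) \<Rightarrow> (real \<Rightarrow> 'a \<Rightarrow> real) \<Rightarrow> real" where
  "st_inner T \<Omega> f g = (LINT t:{0..T}|lborel. (LINT y:\<Omega>|lborel. f t y * g t y))"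

definition gram_S :: "real \<Rightarrow> nat \<Rightarrow> (nat \<Rightarrow> real \<Rightarrow> real) \<Rightarrow> real mat" where
  "gram_S T s \<psi> = mat s s (\<lambda>(i,j). LINT t:{0..T}|lborel. \<psi> i t * \<psi> j t)"

definition gram_Y :: "'a::euclidean_space set \<Rightarrow> nat \<Rightarrow> (nat \<Rightarrow> 'a \<Rightarrow> real) \<Rightarrow> real mat" where
  "gram_Y \<Omega> q \<nu> = mat q q (\<lambda>(i,j). LINT y:\<Omega>|lborel. \<nu> i y * \<nu> j y)"

definition is_proj_Y :: "'a::euclidean_space set \<Rightarrow> nat \<Rightarrow> (nat \<Rightarrow> 'a \<Rightarrow> real) \<Rightarrow> ('a \<Rightarrow> real) \<Rightarrow> (nat \<Rightarrow> real) \<Rightarrow> bool" where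
  "is_proj_Y \<Omega> q \<nu> x0 c \<longleftrightarrow>
     (\<forall>k<q. (LINT y:\<Omega>|lborel. (x0 y - (\<Sum>i<q. c i * \<nu> i y)) * \<nu> k y) = 0)"

definition init_ok :: "'a::euclidean_space set \<Rightarrow> nat \<Rightarrow> (nat \<Rightarrow> real \<Rightarrow> real) \<Rightarrow> (nat \<Rightarrow> 'a \<Rightarrow> real) \<Rightarrow> ('a \<Rightarrow> real) \<Rightarrow> real mat \<Rightarrow> bool" where
  "init_ok \<Omega> q \<psi> \<nu> x0 X \<longleftrightarrow>
     (\<exists>c. is_proj_Y \<Omega> q \<nu> x0 c \<and>
          (AE y in lborel. y \<in> \<Omega> \<longrightarrow> stfun \<psi> \<nu> X 0 y = (\<Sum>i<q. c i * \<nu> i y)))"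

definition U_hat :: "real mat \<Rightarrow> real mat \<Rightarrow> real mat" where
  "U_hat LS Ur = mat (dim_row Ur) (dim_col Ur + 1)
      (\<lambda>(i,j). if j = 0 then transpose_mat LS $$ (i,0) else Ur $$ (i, j - 1))"

text \<open>coefficient matrices (w.r.t. psi_j nu_i) of the elements of Shat.Y, where
  [psihat_1..psihat_shat]^T = U^T L_S^{-1} [psi_1..psi_s]^T : an element
  sum_{i,k} Z_{ik} nu_i psihat_k has psi-coefficients Z * U^T * L_S^{-1}\<close>
definition in_hatSY :: "nat \<Rightarrow> real mat \<Rightarrow> real mat \<Rightarrow> real mat \<Rightarrow> bool" where
  "in_hatSY q U LS X \<longleftrightarrow>
     (\<exists>Z \<in> carrier_mat q (dim_col U). X = Z * (transpose_mat U * inv_m LS))"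

definition is_proj_hat :: "real \<Rightarrow> 'a::euclidean_space set \<Rightarrow> nat \<Rightarrow> (nat \<Rightarrow> real \<Rightarrow> real) \<Rightarrow>
    (nat \<Rightarrow> 'a \<Rightarrow> real) \<Rightarrow> ('a \<Rightarrow> real) \<Rightarrow> real mat \<Rightarrow> real mat \<Rightarrow> real mat \<Rightarrow> real mat \<Rightarrow> bool" where
  "is_proj_hat T \<Omega> q \<psi> \<nu> x0 U LS X Xp \<longleftrightarrow>
     Xp \<in> carrier_mat (dim_row X) (dim_col X) \<and>
     in_hatSY q U LS Xp \<and> init_ok \<Omega> q \<psi> \<nu> x0 Xp \<and>
     (\<forall>Z \<in> carrier_mat (dim_row X) (dim_col X). in_hatSY q U LS Z \<longrightarrow> init_ok \<Omega> q \<psi> \<nu> x0 Z \<longrightarrow>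
        st_inner T \<Omega> (stfun \<psi> \<nu> (X - Xp)) (stfun \<psi> \<nu> (Z - Xp)) = 0)"

end

theory Submission
  imports Defs
begin

text \<open>
  Write W = L_Y^T (ring X) L_S and let U_k hold its k leading right singular vectors. The
  candidate Xc keeps the initial column of X and replaces the other columns by those of
  M = (ring X) L_S U_k U_k^T L_S^-1. As L_S is upper triangular, W has zero first column; hence
  either U_k has zero first row, or all singular values beyond the k-th vanish and
  W U_k U_k^T = W. In both cases M has zero first column, so Xc satisfies the initial condition,
  and the rows of Xc L_S are combinations of the rows of U^T = [e_1^T L_S; U_k^T], so Xc lies in
  the reduced space.

  In the coefficients L_Y^T (-) L_S the space-time inner product becomes the Frobenius inner
  product, and the residual X - Xc becomes W - W U_k U_k^T, which annihilates U_k. A direction D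
  of the reduced affine space has zero initial column and satisfies D L_S = Z U^T. If
  W U_k U_k^T = W the residual vanishes; otherwise the first row of U_k vanishes, which forces
  the first column of Z to vanish. Either way the residual is orthogonal to the reduced affine
  space, and this characterises Xc as the projection.
\<close>

(* Unlike assoc_mult_mat, the side conditions contain no variables absent from the conclusion,
   so the simplifier can discharge them from dimension equations. *)
lemma assoc_mult_mat_dim:
  fixes A B C :: "'a::semiring_0 mat"
  shows "dim_col A = dim_row B \<Longrightarrow> dim_col B = dim_row C \<Longrightarrow> A * B * C = A * (B * C)"
  by (rule assoc_mult_mat[of A "dim_row A" "dim_col A" B "dim_col B" C "dim_col C"]) auto

lemma mult_mat_vec_zero_vec: "A \<in> carrier_mat n m \<Longrightarrow> A *\<^sub>v 0\<^sub>v m = 0\<^sub>v n"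
  by (intro eq_vecI) auto

section \<open>Frobenius inner product\<close>

definition frob_inner :: "real mat \<Rightarrow> real mat \<Rightarrow> real" where
  "frob_inner A B = (\<Sum>i<dim_row A. \<Sum>j<dim_col A. A $$ (i,j) * B $$ (i,j))"

lemma frob_inner_commute: "A \<in> carrier_mat n m \<Longrightarrow> B \<in> carrier_mat n m \<Longrightarrow> frob_inner A B = frob_inner B A"
  by (simp add: frob_inner_def mult.commute)

lemma frob_inner_diff_left:
  "A \<in> carrier_mat n m \<Longrightarrow> B \<in> carrier_mat n m \<Longrightarrow> C \<in> carrier_mat n m \<Longrightarrow>
   frob_inner (A - B) C = frob_inner A C - frob_inner B C"
  by (simp add: frob_inner_def left_diff_distrib sum_subtractf)

lemma frob_inner_diff_right:
  "A \<in> carrier_mat n m \<Longrightarrow> B \<in> carrier_mat n m \<Longrightarrow> C \<in> carrier_mat n m \<Longrightarrow>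
   frob_inner A (B - C) = frob_inner A B - frob_inner A C"
  by (simp add: frob_inner_def right_diff_distrib sum_subtractf)

lemma frob_inner_zero_left [simp]: "frob_inner (0\<^sub>m n m) B = 0"
  by (simp add: frob_inner_def)

lemma frob_inner_self_eq_0:
  assumes "A \<in> carrier_mat n m" "frob_inner A A = 0"
  shows "A = 0\<^sub>m n m"
proof (rule eq_matI)
  fix i j assume "i < dim_row (0\<^sub>m n m :: real mat)" "j < dim_col (0\<^sub>m n m :: real mat)"
  then have ij: "i \<in> {..<n}" "j \<in> {..<m}" by auto
  have "(\<Sum>i<n. \<Sum>j<m. (A $$ (i,j))\<^sup>2) = 0"
    using assms by (simp add: frob_inner_def power2_eq_square)
  then have "(\<Sum>j<m. (A $$ (i,j))\<^sup>2) = 0"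
    using ij by (simp add: sum_nonneg_eq_0_iff sum_nonneg)
  then show "A $$ (i,j) = 0\<^sub>m n m $$ (i,j)"
    using ij by (simp add: sum_nonneg_eq_0_iff)
qed (use assms in auto)

lemma frob_inner_as_sum_cols:
  assumes "A \<in> carrier_mat n m" "B \<in> carrier_mat n m"
  shows "frob_inner A B = (\<Sum>j<m. col A j \<bullet> col B j)"
  using assms unfolding frob_inner_def scalar_prod_def
  by (simp add: atLeast0LessThan sum.swap[of _ "{..<n}"])

lemma frob_inner_mult_left:
  assumes "A \<in> carrier_mat n m" "L \<in> carrier_mat n p" "N \<in> carrier_mat p m"
  shows "frob_inner A (L * N) = frob_inner (transpose_mat L * A) N"
proof -
  have "col A j \<bullet> (L *\<^sub>v col N j) = (transpose_mat L *\<^sub>v col A j) \<bullet> col N j" if "j < m" for j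
    using assms that by (simp add: transpose_vec_mult_scalar)
  then show ?thesis
    using assms by (simp add: frob_inner_as_sum_cols[of _ n m] frob_inner_as_sum_cols[of _ p m])
qed

lemma frob_inner_transpose:
  "A \<in> carrier_mat n m \<Longrightarrow> B \<in> carrier_mat n m \<Longrightarrow> frob_inner (transpose_mat A) (transpose_mat B) = frob_inner A B"
  unfolding frob_inner_def by (simp add: sum.swap[of _ "{..<m}"])

lemma frob_inner_mult_right:
  assumes "A \<in> carrier_mat n m" "N \<in> carrier_mat n p" "M \<in> carrier_mat p m"
  shows "frob_inner A (N * M) = frob_inner (A * transpose_mat M) N"
proof -
  have "frob_inner A (N * M) = frob_inner (transpose_mat A) (transpose_mat M * transpose_mat N)"
    using assms by (simp add: frob_inner_transpose[symmetric, of A n m] transpose_mult)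
  also have "\<dots> = frob_inner (M * transpose_mat A) (transpose_mat N)"
    using assms by (simp add: frob_inner_mult_left[of _ m n])
  also have "\<dots> = frob_inner (A * transpose_mat M) N"
    using assms by (simp add: frob_inner_transpose[symmetric, of _ n p] transpose_mult)
  finally show ?thesis .
qed

lemma frob_inner_eq_0_if_supports_disjoint:
  assumes "\<And>i j. i < dim_row A \<Longrightarrow> j < dim_col A \<Longrightarrow> A $$ (i,j) = 0 \<or> B $$ (i,j) = 0"
  shows "frob_inner A B = 0"
  using assms unfolding frob_inner_def by (force intro!: sum.neutral)

section \<open>Triangular factors\<close>

lemma col_mult_upper_triangular_0:
  fixes A L :: "'a::comm_semiring_0 mat"
  assumes "upper_triangular L" "L \<in> carrier_mat m m" "A \<in> carrier_mat n m" "0 < m"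
  shows "col (A * L) 0 = L $$ (0,0) \<cdot>\<^sub>v col A 0"
proof (rule eq_vecI)
  fix i assume "i < dim_vec (L $$ (0,0) \<cdot>\<^sub>v col A 0)"
  then have i: "i < n" using assms by simp
  have "L $$ (j,0) = 0" if "0 < j" "j < m" for j
    using assms(1,2) that by (simp add: upper_triangularD)
  then have "(\<Sum>j\<in>{..<m} - {0}. A $$ (i,j) * L $$ (j,0)) = 0"
    by (intro sum.neutral) auto
  then have "(\<Sum>j<m. A $$ (i,j) * L $$ (j,0)) = A $$ (i,0) * L $$ (0,0)"
    using assms by (simp add: sum.remove[of _ 0])
  then show "col (A * L) 0 $ i = (L $$ (0,0) \<cdot>\<^sub>v col A 0) $ i"
    using assms i by (simp add: scalar_prod_def atLeast0LessThan mult.commute)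
qed (use assms in auto)

lemma col_0_eq_0_if_col_mult_upper_triangular:
  fixes A L :: "'a::field mat"
  assumes "upper_triangular L" "L \<in> carrier_mat m m" "L $$ (0,0) \<noteq> 0" "A \<in> carrier_mat n m" "0 < m"
    and "col (A * L) 0 = 0\<^sub>v n"
  shows "col A 0 = 0\<^sub>v n"
proof (rule eq_vecI)
  fix i assume i: "i < dim_vec (0\<^sub>v n :: 'a vec)"
  have eq: "L $$ (0,0) \<cdot>\<^sub>v col A 0 = 0\<^sub>v n"
    using col_mult_upper_triangular_0[OF assms(1,2,4,5)] assms(6) by simp
  have "(L $$ (0,0) \<cdot>\<^sub>v col A 0) $ i = 0"
    unfolding eq using i by simp
  then show "col A 0 $ i = 0\<^sub>v n $ i"
    using assms(3,4) i by simp
qed (use assms in simp)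

lemma inv_m_inverse:
  assumes "A \<in> carrier_mat n n" "invertible_mat A"
  shows "inv_m A \<in> carrier_mat n n" "A * inv_m A = 1\<^sub>m n" "inv_m A * A = 1\<^sub>m n"
proof -
  obtain B where B: "A * B = 1\<^sub>m n" "B * A = 1\<^sub>m (dim_row B)"
    using assms unfolding invertible_mat_def inverts_mat_def by auto
  have "dim_row B = n" "dim_col B = n"
    using assms arg_cong[OF B(2), of dim_col] arg_cong[OF B(1), of dim_col] by auto
  then have "B \<in> carrier_mat n n" by auto
  then have "\<exists>B. B \<in> carrier_mat (dim_row A) (dim_row A) \<and>
      A * B = 1\<^sub>m (dim_row A) \<and> B * A = 1\<^sub>m (dim_row A)"
    using assms B by auto
  from someI_ex[OF this] show "inv_m A \<in> carrier_mat n n" "A * inv_m A = 1\<^sub>m n" "inv_m A * A = 1\<^sub>m n"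
    using assms unfolding inv_m_def by auto
qed

lemma upper_triangular_invertible_diag_0:
  fixes L :: "real mat"
  assumes "upper_triangular L" "L \<in> carrier_mat m m" "invertible_mat L" "0 < m"
  shows "L $$ (0,0) \<noteq> 0"
proof
  assume L00: "L $$ (0,0) = 0"
  note inv = inv_m_inverse[OF assms(2,3)]
  have "col (1\<^sub>m m) 0 = col (inv_m L * L) 0"
    using inv by simp
  also have "\<dots> = L $$ (0,0) \<cdot>\<^sub>v col (inv_m L) 0"
    using assms inv by (intro col_mult_upper_triangular_0) auto
  finally have "col (1\<^sub>m m) 0 $ 0 = (0::real)"
    using L00 assms inv by simp
  then show False
    using assms by simp
qed

section \<open>Truncated singular value decompositions\<close>

lemma lead_cols_carrier: "V \<in> carrier_mat n m \<Longrightarrow> lead_cols k V \<in> carrier_mat n k"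
  by (simp add: lead_cols_def)

lemma index_lead_cols [simp]: "i < dim_row V \<Longrightarrow> j < k \<Longrightarrow> lead_cols k V $$ (i,j) = V $$ (i,j)"
  by (simp add: lead_cols_def)

lemma dim_lead_cols [simp]: "dim_row (lead_cols k V) = dim_row V" "dim_col (lead_cols k V) = k"
  by (simp_all add: lead_cols_def)

lemma mult_lead_cols:
  assumes "A \<in> carrier_mat n m" "B \<in> carrier_mat m p" "k \<le> p"
  shows "A * lead_cols k B = lead_cols k (A * B)"
  using assms by (intro eq_matI) (auto simp: scalar_prod_def)

lemma orthonormal_cols_lead_cols:
  assumes "orthonormal_cols V" "k \<le> dim_col V"
  shows "orthonormal_cols (lead_cols k V)"
proof -
  have "(transpose_mat (lead_cols k V) * lead_cols k V) $$ (a,b) = (transpose_mat V * V) $$ (a,b)"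
    if "a < k" "b < k" for a b
    using assms that by (simp add: scalar_prod_def)
  then show ?thesis
    using assms unfolding orthonormal_cols_def by (intro eq_matI) auto
qed

lemma lead_cols_mult_transpose_lead_cols:
  assumes "A \<in> carrier_mat n m" "B \<in> carrier_mat p m" "k \<le> m"
    and "\<And>i j. i < n \<Longrightarrow> k \<le> j \<Longrightarrow> j < m \<Longrightarrow> A $$ (i,j) = 0"
  shows "lead_cols k A * transpose_mat (lead_cols k B) = A * transpose_mat B"
proof (rule eq_matI)
  fix i e assume "i < dim_row (A * transpose_mat B)" "e < dim_col (A * transpose_mat B)"
  then have i: "i < n" and e: "e < p" using assms by auto
  have "(\<Sum>j<k. A $$ (i,j) * B $$ (e,j)) = (\<Sum>j<m. A $$ (i,j) * B $$ (e,j))"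
    by (rule sum.mono_neutral_left) (use assms i in auto)
  then show "(lead_cols k A * transpose_mat (lead_cols k B)) $$ (i,e) = (A * transpose_mat B) $$ (i,e)"
    using assms i e by (simp add: scalar_prod_def atLeast0LessThan)
qed (use assms in auto)

lemma is_svdD:
  assumes "is_svd W P Sig V" "W \<in> carrier_mat q s"
  shows "P \<in> carrier_mat q q" "transpose_mat P * P = 1\<^sub>m q"
    and "V \<in> carrier_mat s s" "transpose_mat V * V = 1\<^sub>m s"
    and "Sig \<in> carrier_mat q s" "\<And>a b. a < q \<Longrightarrow> b < s \<Longrightarrow> a \<noteq> b \<Longrightarrow> Sig $$ (a,b) = 0"
    and "\<And>a. a < min q s \<Longrightarrow> Sig $$ (a,a) \<ge> 0"
    and "\<And>a b. a \<le> b \<Longrightarrow> b < min q s \<Longrightarrow> Sig $$ (b,b) \<le> Sig $$ (a,a)"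
    and "W = P * Sig * transpose_mat V"
  using assms unfolding is_svd_def orthonormal_cols_def by auto

lemma is_svd_diag_mult_first_row:
  fixes W P Sig V :: "real mat"
  assumes svd: "is_svd W P Sig V" and W: "W \<in> carrier_mat q s" "col W 0 = 0\<^sub>v q" and a: "a < q" "a < s"
  shows "Sig $$ (a,a) * V $$ (0,a) = 0"
proof -
  note P = is_svdD(1,2)[OF svd W(1)] and V = is_svdD(3,4)[OF svd W(1)] and Sig = is_svdD(5)[OF svd W(1)]
  have "transpose_mat P * W = transpose_mat P * (P * (Sig * transpose_mat V))"
    using P V Sig by (simp add: is_svdD(9)[OF svd W(1)])
  also have "\<dots> = (transpose_mat P * P) * (Sig * transpose_mat V)"
    by (rule assoc_mult_mat[symmetric]) (use P V Sig in auto)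
  finally have "Sig * transpose_mat V = transpose_mat P * W"
    using P V Sig by simp
  then have "col (Sig * transpose_mat V) 0 $ a = 0"
    using P W a by auto
  moreover have "col (Sig * transpose_mat V) 0 $ a = (\<Sum>b<s. Sig $$ (a,b) * V $$ (0,b))"
    using Sig V a by (simp add: scalar_prod_def atLeast0LessThan)
  moreover have "(\<Sum>b<s. Sig $$ (a,b) * V $$ (0,b)) = Sig $$ (a,a) * V $$ (0,a)"
    using a is_svdD(6)[OF svd W(1)] by (subst sum.remove[of _ a]) (auto intro!: sum.neutral)
  ultimately show ?thesis
    by simp
qed

lemma is_svd_truncation_exact:
  fixes W P Sig V :: "real mat"
  assumes svd: "is_svd W P Sig V" and W: "W \<in> carrier_mat q s" and k: "k \<le> s"
    and Sig_tail: "\<And>a b. a < q \<Longrightarrow> k \<le> b \<Longrightarrow> b < s \<Longrightarrow> Sig $$ (a,b) = 0"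
  shows "W * lead_cols k V * transpose_mat (lead_cols k V) = W"
proof -
  note P = is_svdD(1)[OF svd W] and V = is_svdD(3,4)[OF svd W] and Sig = is_svdD(5)[OF svd W]
  have Vk: "lead_cols k V \<in> carrier_mat s k"
    using V(1) by (rule lead_cols_carrier)
  have SV: "Sig * (transpose_mat V * lead_cols k V) = lead_cols k Sig"
    using Sig V k mult_lead_cols[of "transpose_mat V" s s V s k] mult_lead_cols[of Sig q s "1\<^sub>m s" s k]
    by simp
  have "W * lead_cols k V * transpose_mat (lead_cols k V)
      = P * (Sig * (transpose_mat V * lead_cols k V)) * transpose_mat (lead_cols k V)"
    using carrier_matD[OF P] carrier_matD[OF V(1)] carrier_matD[OF Sig] carrier_matD[OF Vk]
    by (simp add: is_svdD(9)[OF svd W] assoc_mult_mat_dim del: assoc_mult_mat)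
  also have "\<dots> = P * (lead_cols k Sig * transpose_mat (lead_cols k V))"
    unfolding SV using carrier_matD[OF P] carrier_matD[OF Sig] carrier_matD[OF Vk]
    by (simp add: assoc_mult_mat_dim del: assoc_mult_mat)
  also have "\<dots> = W"
    using P V Sig k Sig_tail by (simp add: lead_cols_mult_transpose_lead_cols is_svdD(9)[OF svd W])
  finally show ?thesis .
qed

lemma svd_first_row_0_or_truncation_exact:
  fixes W P Sig V :: "real mat"
  assumes svd: "is_svd W P Sig V" and W: "W \<in> carrier_mat q s" "col W 0 = 0\<^sub>v q" and k: "k \<le> s"
  shows "(\<forall>b<k. V $$ (0,b) = 0) \<or> W * lead_cols k V * transpose_mat (lead_cols k V) = W"
proof (cases "\<forall>b<k. V $$ (0,b) = 0")
  case False
  then obtain j where j: "j < k" "V $$ (0,j) \<noteq> 0" by auto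
  (* W e_1 = 0 forces Sig_jj = 0; later singular values are nonnegative and no larger. *)
  have "Sig $$ (a,b) = 0" if "a < q" "k \<le> b" "b < s" for a b
  proof (cases "a = b")
    case True
    then have "Sig $$ (j,j) = 0"
      using is_svd_diag_mult_first_row[OF svd W, of j] j that by simp
    then show ?thesis
      using is_svdD(7)[OF svd W(1), of b] is_svdD(8)[OF svd W(1), of j b] True that j by force
  qed (use is_svdD(6)[OF svd W(1)] that in simp)
  then show ?thesis
    using is_svd_truncation_exact[OF svd W(1) k] by simp
qed simp

section \<open>The reduced time space\<close>

lemma ring_carrier: "X \<in> carrier_mat n m \<Longrightarrow> ring X \<in> carrier_mat n m"
  and dim_ring [simp]: "dim_row (ring X) = dim_row X" "dim_col (ring X) = dim_col X"
  by (simp_all add: ring_def)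

lemma index_ring [simp]:
  "i < dim_row X \<Longrightarrow> j < dim_col X \<Longrightarrow> ring X $$ (i,j) = (if j = 0 then 0 else X $$ (i,j))"
  by (simp add: ring_def)

lemma
  assumes "X \<in> carrier_mat n m" "M \<in> carrier_mat n m" "col M 0 = 0\<^sub>v n" "0 < m"
  shows ring_minus_ring_plus: "ring (X - ring X + M) = M"
    and col_minus_ring_plus_0: "col (X - ring X + M) 0 = col X 0"
proof -
  have M0: "M $$ (i,0) = 0" if "i < n" for i
  proof -
    have "col M 0 $ i = 0"
      using assms(3) that by simp
    then show ?thesis
      using assms(2,4) that by simp
  qed
  show "ring (X - ring X + M) = M"
    using assms(1,2) M0 by (intro eq_matI) auto
  show "col (X - ring X + M) 0 = col X 0"
    using assms(1,2,4) M0 by (intro eq_vecI) auto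
qed

lemma index_mult_minus_ring:
  assumes "X \<in> carrier_mat n m" "L \<in> carrier_mat m p" "i < n" "c < p" "0 < m"
  shows "((X - ring X) * L) $$ (i,c) = X $$ (i,0) * L $$ (0,c)"
proof -
  have "((X - ring X) * L) $$ (i,c) = (\<Sum>j<m. (if j = 0 then X $$ (i,0) else 0) * L $$ (j,c))"
    using assms by (auto simp: scalar_prod_def atLeast0LessThan intro!: sum.cong)
  then show ?thesis
    using assms by (simp add: if_distrib[of "\<lambda>x. x * _"] cong: if_cong)
qed

lemma U_hat_carrier: "V \<in> carrier_mat n k \<Longrightarrow> U_hat L V \<in> carrier_mat n (Suc k)"
  and dim_U_hat [simp]: "dim_row (U_hat L V) = dim_row V" "dim_col (U_hat L V) = Suc (dim_col V)"
  by (simp_all add: U_hat_def)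

lemma index_U_hat [simp]:
  "L \<in> carrier_mat m m \<Longrightarrow> c < m \<Longrightarrow> c < dim_row V \<Longrightarrow> U_hat L V $$ (c,0) = L $$ (0,c)"
  "c < dim_row V \<Longrightarrow> b < dim_col V \<Longrightarrow> U_hat L V $$ (c, Suc b) = V $$ (c,b)"
  by (simp_all add: U_hat_def)

lemma mult_transpose_U_hat:
  assumes "Z \<in> carrier_mat n (Suc k)" "V \<in> carrier_mat m k" "L \<in> carrier_mat m m" "i < n" "c < m"
  shows "(Z * transpose_mat (U_hat L V)) $$ (i,c) = Z $$ (i,0) * L $$ (0,c) + (\<Sum>b<k. Z $$ (i, Suc b) * V $$ (c,b))"
proof -
  have "(Z * transpose_mat (U_hat L V)) $$ (i,c) = (\<Sum>b<Suc k. Z $$ (i,b) * U_hat L V $$ (c,b))"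
    using assms by (simp add: scalar_prod_def atLeast0LessThan)
  then show ?thesis
    using assms by (simp add: sum.lessThan_Suc_shift del: sum.lessThan_Suc)
qed

lemma mult_U_hat_Suc:
  assumes "A \<in> carrier_mat n m" "V \<in> carrier_mat m k" "i < n" "b < k"
  shows "(A * U_hat L V) $$ (i, Suc b) = (A * V) $$ (i,b)"
  using assms by (simp add: scalar_prod_def)

lemma in_hatSY_iff:
  assumes "L \<in> carrier_mat s s" "invertible_mat L" "U \<in> carrier_mat s m" "Y \<in> carrier_mat q s"
  shows "in_hatSY q U L Y \<longleftrightarrow> (\<exists>Z \<in> carrier_mat q m. Y * L = Z * transpose_mat U)"
proof -
  note inv = inv_m_inverse[OF assms(1,2)]
  have "Y * L = Z * transpose_mat U \<longleftrightarrow> Y = Z * (transpose_mat U * inv_m L)"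
    if "Z \<in> carrier_mat q m" for Z
  proof
    assume "Y * L = Z * transpose_mat U"
    then have "Y * L * inv_m L = Z * transpose_mat U * inv_m L" by simp
    then show "Y = Z * (transpose_mat U * inv_m L)"
      using assms inv that by simp
  next
    assume "Y = Z * (transpose_mat U * inv_m L)"
    moreover have "transpose_mat U * inv_m L \<in> carrier_mat m s"
      using assms inv by simp
    ultimately have "Y * L = Z * (transpose_mat U * inv_m L * L)"
      using assms that by (simp only: assoc_mult_mat)
    then show "Y * L = Z * transpose_mat U"
      using assms inv by simp
  qed
  then show ?thesis
    using assms unfolding in_hatSY_def by auto
qed

lemma in_hatSY_diff:
  assumes "in_hatSY q U L A" "in_hatSY q U L B" "U \<in> carrier_mat s m" "L \<in> carrier_mat s s"
  shows "in_hatSY q U L (A - B)"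
proof -
  obtain ZA ZB where Z: "ZA \<in> carrier_mat q m" "A = ZA * (transpose_mat U * inv_m L)"
    "ZB \<in> carrier_mat q m" "B = ZB * (transpose_mat U * inv_m L)"
    using assms unfolding in_hatSY_def by auto
  have "transpose_mat U * inv_m L \<in> carrier_mat m (dim_col (inv_m L))"
    using assms by (intro carrier_matI) auto
  then have "A - B = (ZA - ZB) * (transpose_mat U * inv_m L)"
    using Z by (simp add: minus_mult_distrib_mat[of _ q m])
  then show ?thesis
    using Z assms unfolding in_hatSY_def by (auto simp: minus_carrier_mat)
qed

lemma in_hatSY_truncation:
  fixes X L V :: "real mat"
  assumes X: "X \<in> carrier_mat q s" and L: "L \<in> carrier_mat s s" "invertible_mat L"
    and V: "V \<in> carrier_mat s k" and s: "0 < s"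
  shows "in_hatSY q (U_hat L V) L (X - ring X + ring X * L * V * transpose_mat V * inv_m L)"
proof -
  note inv = inv_m_inverse[OF L]
  note dims = carrier_matD[OF X] carrier_matD[OF L(1)] carrier_matD[OF V] carrier_matD[OF inv(1)]
  define G where "G = ring X * L * V * transpose_mat V"
  define Z where "Z = mat q (Suc k) (\<lambda>(i,b). if b = 0 then X $$ (i,0) else (ring X * L * V) $$ (i, b - 1))"
  have G: "G \<in> carrier_mat q s"
    using dims by (intro carrier_matI) (simp_all add: G_def)
  have "(X - ring X + G * inv_m L) * L = (X - ring X) * L + G * inv_m L * L"
    using X L G inv by (intro add_mult_distrib_mat) (auto simp: minus_carrier_mat)
  also have "\<dots> = (X - ring X) * L + G"
    using G inv L by simp
  also have "\<dots> = Z * transpose_mat (U_hat L V)"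
  proof (rule eq_matI)
    fix i c assume "i < dim_row (Z * transpose_mat (U_hat L V))" "c < dim_col (Z * transpose_mat (U_hat L V))"
    then have ic: "i < q" "c < s"
      using V by (auto simp: Z_def)
    have Z: "Z \<in> carrier_mat q (Suc k)"
      by (simp add: Z_def)
    have "((X - ring X) * L + G) $$ (i,c) = ((X - ring X) * L) $$ (i,c) + G $$ (i,c)"
      using dims ic G by (intro index_add_mat(1)) auto
    also have "\<dots> = X $$ (i,0) * L $$ (0,c) + (\<Sum>b<k. (ring X * L * V) $$ (i,b) * V $$ (c,b))"
      using index_mult_minus_ring[OF X L(1) ic s] dims ic by (simp add: G_def scalar_prod_def atLeast0LessThan)
    also have "\<dots> = (Z * transpose_mat (U_hat L V)) $$ (i,c)"
      unfolding mult_transpose_U_hat[OF Z V L(1) ic] using ic by (simp add: Z_def)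
    finally show "((X - ring X) * L + G) $$ (i,c) = (Z * transpose_mat (U_hat L V)) $$ (i,c)" .
  qed (use dims in \<open>auto simp: G_def Z_def\<close>)
  finally show ?thesis
    using assms inv by (subst in_hatSY_iff) (auto simp: Z_def G_def)
qed

lemma frob_inner_eq_0_if_orth_U_hat:
  fixes E D Z L V :: "real mat"
  assumes L: "L \<in> carrier_mat s s" "upper_triangular L" "L $$ (0,0) \<noteq> 0" "0 < s"
    and V: "V \<in> carrier_mat s k" "\<forall>b<k. V $$ (0,b) = 0"
    and E: "E \<in> carrier_mat n s" "E * V = 0\<^sub>m n k"
    and D: "D \<in> carrier_mat n s" "col D 0 = 0\<^sub>v n"
    and Z: "Z \<in> carrier_mat n (Suc k)" "D * L = Z * transpose_mat (U_hat L V)"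
  shows "frob_inner E (D * L) = 0"
proof -
  (* E U vanishes outside the first column, and Z inside it. *)
  have Z0: "Z $$ (i,0) = 0" if "i < n" for i
  proof -
    have "col (D * L) 0 = 0\<^sub>v n"
      using col_mult_upper_triangular_0[OF L(2,1) D(1) L(4)] D(2) by auto
    then have "col (D * L) 0 $ i = 0"
      using that by simp
    then have "(Z * transpose_mat (U_hat L V)) $$ (i,0) = 0"
      using L D that by (simp add: Z(2)[symmetric])
    then show ?thesis
      using mult_transpose_U_hat[OF Z(1) V(1) L(1) that L(4)] V(2) L(3) by simp
  qed
  have EU: "(E * U_hat L V) $$ (i, Suc b) = 0" if "i < n" "b < k" for i b
    using mult_U_hat_Suc[OF E(1) V(1) that] E(2) that by simp
  have "U_hat L V \<in> carrier_mat s (Suc k)"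
    using V(1) by (rule U_hat_carrier)
  then have "frob_inner E (D * L) = frob_inner (E * U_hat L V) Z"
    using frob_inner_mult_right[OF E(1) Z(1), of "transpose_mat (U_hat L V)"] Z(2) by simp
  also have "\<dots> = 0"
  proof (rule frob_inner_eq_0_if_supports_disjoint)
    fix i j assume "i < dim_row (E * U_hat L V)" "j < dim_col (E * U_hat L V)"
    then show "(E * U_hat L V) $$ (i,j) = 0 \<or> Z $$ (i,j) = 0"
      using E V Z0 EU by (cases j) auto
  qed
  finally show ?thesis .
qed

section \<open>Square-integrable bases\<close>

lemma set_integrable_mult_of_square_integrable:
  fixes f g :: "'b::euclidean_space \<Rightarrow> real"
  assumes "set_borel_measurable lborel A f" "set_integrable lborel A (\<lambda>x. (f x)\<^sup>2)"
    and "set_borel_measurable lborel A g" "set_integrable lborel A (\<lambda>x. (g x)\<^sup>2)"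
  shows "set_integrable lborel A (\<lambda>x. f x * g x)"
proof (rule set_integrable_bound[where f="\<lambda>x. (f x)\<^sup>2 + (g x)\<^sup>2"])
  show "set_integrable lborel A (\<lambda>x. (f x)\<^sup>2 + (g x)\<^sup>2)"
    using assms by (intro set_integral_add) auto
  show "set_borel_measurable lborel A (\<lambda>x. f x * g x)"
  proof -
    have "(\<lambda>x. indicator A x *\<^sub>R (f x * g x)) = (\<lambda>x. (indicator A x *\<^sub>R f x) * (indicator A x *\<^sub>R g x))"
      by (auto simp: indicator_def)
    then show ?thesis
      using assms(1,3) unfolding set_borel_measurable_def by simp
  qed
  show "AE x in lborel. x \<in> A \<longrightarrow> norm (f x * g x) \<le> norm ((f x)\<^sup>2 + (g x)\<^sup>2)"
  proof (intro AE_I2 impI)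
    fix x
    have "2 * (\<bar>f x\<bar> * \<bar>g x\<bar>) \<le> (f x)\<^sup>2 + (g x)\<^sup>2"
      using sum_squares_bound[of "\<bar>f x\<bar>" "\<bar>g x\<bar>"] by (simp add: mult.assoc)
    moreover have "0 \<le> \<bar>f x\<bar> * \<bar>g x\<bar>" by simp
    ultimately have "\<bar>f x\<bar> * \<bar>g x\<bar> \<le> (f x)\<^sup>2 + (g x)\<^sup>2" by linarith
    then show "norm (f x * g x) \<le> norm ((f x)\<^sup>2 + (g x)\<^sup>2)"
      by (simp add: abs_mult)
  qed
qed

lemma set_integrable_sum:
  fixes f :: "'i \<Rightarrow> 'b \<Rightarrow> real"
  assumes "\<And>i. i \<in> I \<Longrightarrow> set_integrable M A (f i)"
  shows "set_integrable M A (\<lambda>x. \<Sum>i\<in>I. f i x)"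
  using assms unfolding set_integrable_def by (simp add: sum_distrib_left)

lemma set_integral_sum:
  fixes f :: "'i \<Rightarrow> 'b \<Rightarrow> real"
  assumes "\<And>i. i \<in> I \<Longrightarrow> set_integrable M A (f i)"
  shows "(LINT x:A|M. \<Sum>i\<in>I. f i x) = (\<Sum>i\<in>I. LINT x:A|M. f i x)"
  using assms unfolding set_integrable_def set_lebesgue_integral_def
  by (simp add: sum_distrib_left integral_sum)

lemma
  fixes f g :: "'i \<Rightarrow> 'b \<Rightarrow> real"
  assumes "finite I" "finite K" "\<And>i k. i \<in> I \<Longrightarrow> k \<in> K \<Longrightarrow> set_integrable M A (\<lambda>x. f i x * g k x)"
  shows set_integrable_sum_mult_sum: "set_integrable M A (\<lambda>x. (\<Sum>i\<in>I. a i * f i x) * (\<Sum>k\<in>K. b k * g k x))"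
    and set_integral_sum_mult_sum: "(LINT x:A|M. (\<Sum>i\<in>I. a i * f i x) * (\<Sum>k\<in>K. b k * g k x))
       = (\<Sum>i\<in>I. \<Sum>k\<in>K. a i * b k * (LINT x:A|M. f i x * g k x))"
proof -
  have expand: "(\<Sum>i\<in>I. a i * f i x) * (\<Sum>k\<in>K. b k * g k x)
      = (\<Sum>p\<in>I \<times> K. (a (fst p) * b (snd p)) * (f (fst p) x * g (snd p) x))" for x
    by (simp add: sum_product sum.cartesian_product split_def mult_ac)
  show "set_integrable M A (\<lambda>x. (\<Sum>i\<in>I. a i * f i x) * (\<Sum>k\<in>K. b k * g k x))"
    unfolding expand using assms(3) by (intro set_integrable_sum) auto
  show "(LINT x:A|M. (\<Sum>i\<in>I. a i * f i x) * (\<Sum>k\<in>K. b k * g k x))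
       = (\<Sum>i\<in>I. \<Sum>k\<in>K. a i * b k * (LINT x:A|M. f i x * g k x))"
    unfolding expand using assms
    by (subst set_integral_sum) (auto simp: sum.cartesian_product split_def)
qed

lemma dim_gram_S [simp]: "dim_row (gram_S T s \<psi>) = s" "dim_col (gram_S T s \<psi>) = s"
  by (simp_all add: gram_S_def)

lemma dim_gram_Y [simp]: "dim_row (gram_Y \<Omega> q \<nu>) = q" "dim_col (gram_Y \<Omega> q \<nu>) = q"
  by (simp_all add: gram_Y_def)

locale square_integrable_bases =
  fixes T :: real and \<Omega> :: "'a::euclidean_space set" and s q :: nat
    and \<psi> :: "nat \<Rightarrow> real \<Rightarrow> real" and \<nu> :: "nat \<Rightarrow> 'a \<Rightarrow> real"
  assumes psi_L2: "\<And>j. j < s \<Longrightarrow> set_borel_measurable lborel {0..T} (\<psi> j)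
                     \<and> set_integrable lborel {0..T} (\<lambda>t. (\<psi> j t)\<^sup>2)"
    and nu_L2: "\<And>i. i < q \<Longrightarrow> set_borel_measurable lborel \<Omega> (\<nu> i)
                     \<and> set_integrable lborel \<Omega> (\<lambda>y. (\<nu> i y)\<^sup>2)"
begin

lemma set_integrable_psi_psi: "j < s \<Longrightarrow> l < s \<Longrightarrow> set_integrable lborel {0..T} (\<lambda>t. \<psi> j t * \<psi> l t)"
  using psi_L2[of j] psi_L2[of l] by (simp add: set_integrable_mult_of_square_integrable)

lemma set_integrable_nu_nu: "i < q \<Longrightarrow> k < q \<Longrightarrow> set_integrable lborel \<Omega> (\<lambda>y. \<nu> i y * \<nu> k y)"
  using nu_L2[of i] nu_L2[of k] by (simp add: set_integrable_mult_of_square_integrable)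

lemma stfun_eq_sum_rows:
  "A \<in> carrier_mat q s \<Longrightarrow> stfun \<psi> \<nu> A t y = (\<Sum>i<q. (\<Sum>j<s. A $$ (i,j) * \<psi> j t) * \<nu> i y)"
  by (simp add: stfun_def sum_distrib_left mult_ac)

lemma st_inner_stfun:
  assumes A: "A \<in> carrier_mat q s" and C: "C \<in> carrier_mat q s"
  shows "st_inner T \<Omega> (stfun \<psi> \<nu> A) (stfun \<psi> \<nu> C) = frob_inner A (gram_Y \<Omega> q \<nu> * C * gram_S T s \<psi>)"
proof -
  let ?GY = "gram_Y \<Omega> q \<nu>" and ?GS = "gram_S T s \<psi>"
  define a where "a i t = (\<Sum>j<s. A $$ (i,j) * \<psi> j t)" for i t
  define c where "c k t = (\<Sum>l<s. C $$ (k,l) * \<psi> l t)" for k t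
  define b where "b i t = (\<Sum>l<s. (?GY * C) $$ (i,l) * \<psi> l t)" for i t
  have b_eq: "b i t = (\<Sum>k<q. ?GY $$ (i,k) * c k t)" if "i < q" for i t
    using C that unfolding b_def c_def
    by (simp add: scalar_prod_def atLeast0LessThan sum_distrib_left sum_distrib_right sum.swap[of _ "{..<q}"] mult_ac)
  have space: "(LINT y:\<Omega>|lborel. stfun \<psi> \<nu> A t y * stfun \<psi> \<nu> C t y) = (\<Sum>i<q. a i t * b i t)" for t
  proof -
    have "(LINT y:\<Omega>|lborel. stfun \<psi> \<nu> A t y * stfun \<psi> \<nu> C t y)
        = (\<Sum>i<q. \<Sum>k<q. a i t * c k t * (LINT y:\<Omega>|lborel. \<nu> i y * \<nu> k y))"
      using A C unfolding stfun_eq_sum_rows[OF A] stfun_eq_sum_rows[OF C] a_def c_def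
      by (subst set_integral_sum_mult_sum) (auto simp: set_integrable_nu_nu)
    also have "\<dots> = (\<Sum>i<q. a i t * b i t)"
      by (simp add: b_eq gram_Y_def sum_distrib_left mult_ac)
    finally show ?thesis .
  qed
  have time: "(LINT t:{0..T}|lborel. a i t * b i t) = (\<Sum>j<s. A $$ (i,j) * (?GY * C * ?GS) $$ (i,j))"
    and time_integrable: "set_integrable lborel {0..T} (\<lambda>t. a i t * b i t)" if "i < q" for i
  proof -
    show "set_integrable lborel {0..T} (\<lambda>t. a i t * b i t)"
      unfolding a_def b_def by (rule set_integrable_sum_mult_sum) (auto simp: set_integrable_psi_psi)
    have "(LINT t:{0..T}|lborel. a i t * b i t)
        = (\<Sum>j<s. \<Sum>l<s. A $$ (i,j) * (?GY * C) $$ (i,l) * (LINT t:{0..T}|lborel. \<psi> j t * \<psi> l t))"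
      unfolding a_def b_def by (rule set_integral_sum_mult_sum) (auto simp: set_integrable_psi_psi)
    also have "\<dots> = (\<Sum>j<s. A $$ (i,j) * (?GY * C * ?GS) $$ (i,j))"
      using A C that
      by (simp add: scalar_prod_def atLeast0LessThan sum_distrib_left gram_S_def mult_ac)
    finally show "(LINT t:{0..T}|lborel. a i t * b i t) = (\<Sum>j<s. A $$ (i,j) * (?GY * C * ?GS) $$ (i,j))" .
  qed
  have "st_inner T \<Omega> (stfun \<psi> \<nu> A) (stfun \<psi> \<nu> C) = (LINT t:{0..T}|lborel. \<Sum>i<q. a i t * b i t)"
    unfolding st_inner_def space ..
  also have "\<dots> = (\<Sum>i<q. LINT t:{0..T}|lborel. a i t * b i t)"
    by (rule set_integral_sum) (simp add: time_integrable)
  also have "\<dots> = (\<Sum>i<q. \<Sum>j<s. A $$ (i,j) * (?GY * C * ?GS) $$ (i,j))"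
    by (rule sum.cong) (simp_all only: time lessThan_iff)
  also have "\<dots> = frob_inner A (?GY * C * ?GS)"
    using A by (simp add: frob_inner_def)
  finally show ?thesis .
qed

lemma
  assumes "v \<in> carrier_vec q"
  shows set_integrable_nu_lincomb_square:
      "set_integrable lborel \<Omega> (\<lambda>y. (\<Sum>i<q. v $ i * \<nu> i y) * (\<Sum>k<q. v $ k * \<nu> k y))"
    and set_integral_nu_lincomb_square:
      "(LINT y:\<Omega>|lborel. (\<Sum>i<q. v $ i * \<nu> i y) * (\<Sum>k<q. v $ k * \<nu> k y)) = v \<bullet> (gram_Y \<Omega> q \<nu> *\<^sub>v v)"
proof -
  show "set_integrable lborel \<Omega> (\<lambda>y. (\<Sum>i<q. v $ i * \<nu> i y) * (\<Sum>k<q. v $ k * \<nu> k y))"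
    by (rule set_integrable_sum_mult_sum) (auto simp: set_integrable_nu_nu)
  have "(LINT y:\<Omega>|lborel. (\<Sum>i<q. v $ i * \<nu> i y) * (\<Sum>k<q. v $ k * \<nu> k y))
      = (\<Sum>i<q. \<Sum>k<q. v $ i * v $ k * (LINT y:\<Omega>|lborel. \<nu> i y * \<nu> k y))"
    by (rule set_integral_sum_mult_sum) (auto simp: set_integrable_nu_nu)
  also have "\<dots> = v \<bullet> (gram_Y \<Omega> q \<nu> *\<^sub>v v)"
    using assms by (simp add: scalar_prod_def atLeast0LessThan sum_distrib_left gram_Y_def mult_ac)
  finally show "(LINT y:\<Omega>|lborel. (\<Sum>i<q. v $ i * \<nu> i y) * (\<Sum>k<q. v $ k * \<nu> k y)) = v \<bullet> (gram_Y \<Omega> q \<nu> *\<^sub>v v)" .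
qed

end

section \<open>Projection onto the reduced affine space\<close>

locale nodal_space_time = square_integrable_bases T \<Omega> s q \<psi> \<nu>
  for T :: real and \<Omega> :: "'a::euclidean_space set" and s q :: nat
    and \<psi> :: "nat \<Rightarrow> real \<Rightarrow> real" and \<nu> :: "nat \<Rightarrow> 'a \<Rightarrow> real" +
  fixes x0 :: "'a \<Rightarrow> real" and LS LY :: "real mat"
  assumes nu_basis: "\<And>c. (AE y in lborel. y \<in> \<Omega> \<longrightarrow> (\<Sum>i<q. c i * \<nu> i y) = 0) \<Longrightarrow> \<forall>i<q. c i = 0"
    and s_pos: "s \<ge> 1"
    and nodal: "\<psi> 0 0 = 1" "\<And>j. 0 < j \<Longrightarrow> j < s \<Longrightarrow> \<psi> j 0 = 0"
    and x0_L2: "set_borel_measurable lborel \<Omega> x0" "set_integrable lborel \<Omega> (\<lambda>y. (x0 y)\<^sup>2)"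
    and LS: "LS \<in> carrier_mat s s" "upper_triangular LS" "invertible_mat LS"
            "gram_S T s \<psi> = LS * transpose_mat LS"
    and LY: "LY \<in> carrier_mat q q" "gram_Y \<Omega> q \<nu> = LY * transpose_mat LY"
begin

lemma s_gt_0: "0 < s"
  using s_pos by simp

lemma LS_00_neq_0: "LS $$ (0,0) \<noteq> 0"
  using LS s_gt_0 by (intro upper_triangular_invertible_diag_0) auto

lemma gram_Y_definite:
  assumes v: "v \<in> carrier_vec q" and "v \<bullet> (gram_Y \<Omega> q \<nu> *\<^sub>v v) = 0"
  shows "v = 0\<^sub>v q"
proof -
  let ?f = "\<lambda>y. \<Sum>i<q. v $ i * \<nu> i y"
  have "(LINT y:\<Omega>|lborel. ?f y * ?f y) = 0"
    using assms by (simp add: set_integral_nu_lincomb_square)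
  then have "AE y in lborel. indicator \<Omega> y *\<^sub>R (?f y * ?f y) = 0"
    using set_integrable_nu_lincomb_square[OF v]
    unfolding set_integrable_def set_lebesgue_integral_def
    by (subst integral_nonneg_eq_0_iff_AE[symmetric]) (auto simp: indicator_def)
  then have "AE y in lborel. y \<in> \<Omega> \<longrightarrow> ?f y = 0"
    by eventually_elim (auto simp: indicator_def)
  then have "\<forall>i<q. v $ i = 0"
    by (rule nu_basis)
  then show ?thesis
    using v by (intro eq_vecI) auto
qed

lemma transpose_LY_mult_vec_cancel:
  assumes v: "v \<in> carrier_vec q" and "transpose_mat LY *\<^sub>v v = 0\<^sub>v q"
  shows "v = 0\<^sub>v q"
proof (rule gram_Y_definite[OF v])
  have "gram_Y \<Omega> q \<nu> *\<^sub>v v = LY *\<^sub>v (transpose_mat LY *\<^sub>v v)"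
    using LY v by simp
  moreover have "LY *\<^sub>v 0\<^sub>v q = 0\<^sub>v q"
    using LY by auto
  ultimately show "v \<bullet> (gram_Y \<Omega> q \<nu> *\<^sub>v v) = 0"
    using assms by simp
qed

lemma transpose_LY_mult_cancel:
  assumes A: "A \<in> carrier_mat q n" and "transpose_mat LY * A = 0\<^sub>m q n"
  shows "A = 0\<^sub>m q n"
proof (rule mat_col_eqI)
  fix j assume j: "j < dim_col (0\<^sub>m q n :: real mat)"
  have "transpose_mat LY *\<^sub>v col A j = col (transpose_mat LY * A) j"
    using A LY j by simp
  then have "transpose_mat LY *\<^sub>v col A j = 0\<^sub>v q"
    using assms j by simp
  then show "col A j = col (0\<^sub>m q n) j"
    using A j by (simp add: transpose_LY_mult_vec_cancel)
qed (use A in auto)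

(* The paper's L_Y^T X L_S: coefficients with respect to L^2-orthonormalised bases of S and Y. *)
definition orth_coeffs :: "real mat \<Rightarrow> real mat" where
  "orth_coeffs A = transpose_mat LY * A * LS"

lemma orth_coeffs_carrier: "A \<in> carrier_mat q s \<Longrightarrow> orth_coeffs A \<in> carrier_mat q s"
  using LS LY by (simp add: orth_coeffs_def)

lemma orth_coeffs_diff:
  "A \<in> carrier_mat q s \<Longrightarrow> B \<in> carrier_mat q s \<Longrightarrow> orth_coeffs (A - B) = orth_coeffs A - orth_coeffs B"
  using LS LY unfolding orth_coeffs_def
  by (simp add: mult_minus_distrib_mat[of _ q q] minus_mult_distrib_mat[of _ q s])

lemma orth_coeffs_eq_0:
  assumes A: "A \<in> carrier_mat q s" and "orth_coeffs A = 0\<^sub>m q s"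
  shows "A = 0\<^sub>m q s"
proof (rule transpose_LY_mult_cancel[OF A])
  note inv = inv_m_inverse[OF LS(1,3)]
  have "transpose_mat LY * A = orth_coeffs A * inv_m LS"
    using A LS LY inv carrier_matD[OF A] carrier_matD[OF LS(1)] carrier_matD[OF LY(1)] carrier_matD[OF inv(1)]
    by (simp add: orth_coeffs_def assoc_mult_mat_dim del: assoc_mult_mat)
  then show "transpose_mat LY * A = 0\<^sub>m q s"
    using assms inv by simp
qed

lemma st_inner_orth_coeffs:
  assumes A: "A \<in> carrier_mat q s" and C: "C \<in> carrier_mat q s"
  shows "st_inner T \<Omega> (stfun \<psi> \<nu> A) (stfun \<psi> \<nu> C) = frob_inner (orth_coeffs A) (orth_coeffs C)"
proof -
  note dims = carrier_matD[OF A] carrier_matD[OF C] carrier_matD[OF LS(1)] carrier_matD[OF LY(1)]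
  have "gram_Y \<Omega> q \<nu> * C * gram_S T s \<psi> = LY * (orth_coeffs C * transpose_mat LS)"
    using dims by (simp add: LS(4) LY(2) orth_coeffs_def assoc_mult_mat_dim del: assoc_mult_mat)
  then have "st_inner T \<Omega> (stfun \<psi> \<nu> A) (stfun \<psi> \<nu> C)
      = frob_inner (transpose_mat LY * A) (orth_coeffs C * transpose_mat LS)"
    using A C LS LY orth_coeffs_carrier[OF C] by (simp add: st_inner_stfun frob_inner_mult_left[of _ q s _ q])
  also have "\<dots> = frob_inner (orth_coeffs A) (orth_coeffs C)"
    using A C LS LY orth_coeffs_carrier[OF C] by (simp add: frob_inner_mult_right[of _ q s _ s] orth_coeffs_def)
  finally show ?thesis .
qed

lemma set_integral_proj_residual:
  assumes "k < q"
  shows "(LINT y:\<Omega>|lborel. (x0 y - (\<Sum>i<q. c i * \<nu> i y)) * \<nu> k y)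
       = (LINT y:\<Omega>|lborel. x0 y * \<nu> k y) - (\<Sum>i<q. c i * gram_Y \<Omega> q \<nu> $$ (i,k))"
proof -
  have x0_nu: "set_integrable lborel \<Omega> (\<lambda>y. x0 y * \<nu> k y)"
    using x0_L2 nu_L2[OF assms] by (simp add: set_integrable_mult_of_square_integrable)
  have nu_nu: "set_integrable lborel \<Omega> (\<lambda>y. c i * (\<nu> i y * \<nu> k y))" if "i < q" for i
    using set_integrable_nu_nu[OF that assms] by simp
  have "(\<lambda>y. (x0 y - (\<Sum>i<q. c i * \<nu> i y)) * \<nu> k y) = (\<lambda>y. x0 y * \<nu> k y - (\<Sum>i<q. c i * (\<nu> i y * \<nu> k y)))"
    by (simp add: left_diff_distrib sum_distrib_right mult.assoc)
  then have "(LINT y:\<Omega>|lborel. (x0 y - (\<Sum>i<q. c i * \<nu> i y)) * \<nu> k y)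
      = (LINT y:\<Omega>|lborel. x0 y * \<nu> k y) - (LINT y:\<Omega>|lborel. \<Sum>i<q. c i * (\<nu> i y * \<nu> k y))"
    using set_integral_diff(2)[OF x0_nu set_integrable_sum, of "{..<q}"] nu_nu by simp
  also have "(LINT y:\<Omega>|lborel. \<Sum>i<q. c i * (\<nu> i y * \<nu> k y)) = (\<Sum>i<q. c i * gram_Y \<Omega> q \<nu> $$ (i,k))"
    using assms nu_nu by (subst set_integral_sum) (auto simp: gram_Y_def)
  finally show ?thesis .
qed

lemma is_proj_Y_unique:
  assumes "is_proj_Y \<Omega> q \<nu> x0 c" "is_proj_Y \<Omega> q \<nu> x0 c'" "i < q"
  shows "c i = c' i"
proof -
  define w where "w = vec q (\<lambda>i. c i - c' i)"
  have "(gram_Y \<Omega> q \<nu> *\<^sub>v w) $ k = 0" if "k < q" for k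
  proof -
    have "(\<Sum>i<q. c i * gram_Y \<Omega> q \<nu> $$ (i,k)) = (\<Sum>i<q. c' i * gram_Y \<Omega> q \<nu> $$ (i,k))"
      using assms that by (simp add: is_proj_Y_def set_integral_proj_residual)
    moreover have "(gram_Y \<Omega> q \<nu> *\<^sub>v w) $ k = (\<Sum>i<q. (c i - c' i) * gram_Y \<Omega> q \<nu> $$ (i,k))"
      using that by (simp add: w_def scalar_prod_def atLeast0LessThan gram_Y_def mult.commute)
    ultimately show ?thesis
      by (simp add: left_diff_distrib sum_subtractf)
  qed
  then have "w \<bullet> (gram_Y \<Omega> q \<nu> *\<^sub>v w) = 0"
    by (simp add: scalar_prod_def w_def)
  then have "w = 0\<^sub>v q"
    by (rule gram_Y_definite[rotated]) (simp add: w_def)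
  then have "w $ i = 0"
    using assms(3) by simp
  then show ?thesis
    using assms(3) by (simp add: w_def)
qed

lemma stfun_at_0:
  assumes "A \<in> carrier_mat q s"
  shows "stfun \<psi> \<nu> A 0 y = (\<Sum>i<q. A $$ (i,0) * \<nu> i y)"
proof -
  have "(\<Sum>j<s. A $$ (i,j) * \<psi> j 0) = A $$ (i,0)" for i
    using s_pos nodal by (subst sum.remove[of _ 0]) (auto intro!: sum.neutral)
  then show ?thesis
    using assms by (simp add: stfun_eq_sum_rows)
qed

lemma init_ok_col_0:
  assumes "A \<in> carrier_mat q s" "init_ok \<Omega> q \<psi> \<nu> x0 A"
  obtains c where "is_proj_Y \<Omega> q \<nu> x0 c" "\<And>i. i < q \<Longrightarrow> A $$ (i,0) = c i"
proof -
  obtain c where c: "is_proj_Y \<Omega> q \<nu> x0 c"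
    and "AE y in lborel. y \<in> \<Omega> \<longrightarrow> stfun \<psi> \<nu> A 0 y = (\<Sum>i<q. c i * \<nu> i y)"
    using assms unfolding init_ok_def by blast
  then have "AE y in lborel. y \<in> \<Omega> \<longrightarrow> (\<Sum>i<q. (A $$ (i,0) - c i) * \<nu> i y) = 0"
    by eventually_elim (simp add: stfun_at_0[OF assms(1)] left_diff_distrib sum_subtractf)
  then have "\<forall>i<q. A $$ (i,0) - c i = 0"
    by (rule nu_basis)
  with c that show ?thesis by simp
qed

lemma init_ok_col_0_eq:
  assumes "A \<in> carrier_mat q s" "init_ok \<Omega> q \<psi> \<nu> x0 A" "B \<in> carrier_mat q s" "init_ok \<Omega> q \<psi> \<nu> x0 B"
  shows "col A 0 = col B 0"
proof -
  obtain c where c: "is_proj_Y \<Omega> q \<nu> x0 c" "\<And>i. i < q \<Longrightarrow> A $$ (i,0) = c i"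
    using init_ok_col_0[OF assms(1,2)] by blast
  obtain c' where c': "is_proj_Y \<Omega> q \<nu> x0 c'" "\<And>i. i < q \<Longrightarrow> B $$ (i,0) = c' i"
    using init_ok_col_0[OF assms(3,4)] by blast
  show ?thesis
    using assms s_pos c c' is_proj_Y_unique[OF c(1) c'(1)] by (intro eq_vecI) auto
qed

lemma col_diff_init_ok_0:
  assumes "A \<in> carrier_mat q s" "init_ok \<Omega> q \<psi> \<nu> x0 A" "B \<in> carrier_mat q s" "init_ok \<Omega> q \<psi> \<nu> x0 B"
  shows "col (A - B) 0 = 0\<^sub>v q"
proof (rule eq_vecI)
  fix i assume i: "i < dim_vec (0\<^sub>v q :: real vec)"
  have "col A 0 $ i = col B 0 $ i"
    using init_ok_col_0_eq[OF assms] by simp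
  then show "col (A - B) 0 $ i = 0\<^sub>v q $ i"
    using assms(1,3) s_gt_0 i by simp
qed (use assms in simp)

lemma init_ok_if_col_0_eq:
  assumes "A \<in> carrier_mat q s" "init_ok \<Omega> q \<psi> \<nu> x0 A" "B \<in> carrier_mat q s" "col B 0 = col A 0"
  shows "init_ok \<Omega> q \<psi> \<nu> x0 B"
proof -
  have "B $$ (i,0) = A $$ (i,0)" if "i < q" for i
  proof -
    have "col B 0 $ i = col A 0 $ i"
      using assms(4) by simp
    then show ?thesis
      using assms(1,3) s_pos that by simp
  qed
  then have "stfun \<psi> \<nu> B 0 = stfun \<psi> \<nu> A 0"
    using assms(1,3) by (simp add: fun_eq_iff stfun_at_0)
  then show ?thesis
    using assms(2) by (simp add: init_ok_def)
qed

lemma is_proj_hat_eqI: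
  assumes X: "X \<in> carrier_mat q s" and proj: "is_proj_hat T \<Omega> q \<psi> \<nu> x0 U LS X Xp"
    and Xc: "Xc \<in> carrier_mat q s" "in_hatSY q U LS Xc" "init_ok \<Omega> q \<psi> \<nu> x0 Xc"
    and orth: "\<And>Z. Z \<in> carrier_mat q s \<Longrightarrow> in_hatSY q U LS Z \<Longrightarrow> init_ok \<Omega> q \<psi> \<nu> x0 Z \<Longrightarrow>
        st_inner T \<Omega> (stfun \<psi> \<nu> (X - Xc)) (stfun \<psi> \<nu> (Z - Xc)) = 0"
  shows "Xp = Xc"
proof -
  have Xp: "Xp \<in> carrier_mat q s" "in_hatSY q U LS Xp" "init_ok \<Omega> q \<psi> \<nu> x0 Xp"
    and "st_inner T \<Omega> (stfun \<psi> \<nu> (X - Xp)) (stfun \<psi> \<nu> (Xc - Xp)) = 0"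
    using proj X Xc unfolding is_proj_hat_def by auto
  then have Xp_orth: "frob_inner (orth_coeffs X - orth_coeffs Xp) (orth_coeffs Xc - orth_coeffs Xp) = 0"
    using X Xc by (simp add: st_inner_orth_coeffs orth_coeffs_diff minus_carrier_mat)
  have "st_inner T \<Omega> (stfun \<psi> \<nu> (X - Xc)) (stfun \<psi> \<nu> (Xp - Xc)) = 0"
    using orth Xp by blast
  then have "frob_inner (orth_coeffs X - orth_coeffs Xc) (orth_coeffs Xp - orth_coeffs Xc) = 0"
    using X Xc Xp by (simp add: st_inner_orth_coeffs orth_coeffs_diff minus_carrier_mat)
  with Xp_orth have "frob_inner (orth_coeffs Xp - orth_coeffs Xc) (orth_coeffs Xp - orth_coeffs Xc) = 0"
    using orth_coeffs_carrier[OF X] orth_coeffs_carrier[OF Xc(1)] orth_coeffs_carrier[OF Xp(1)]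
    by (simp add: frob_inner_diff_left[of _ q s] frob_inner_diff_right[of _ q s] frob_inner_commute[of _ q s] minus_carrier_mat)
  then have "orth_coeffs (Xp - Xc) = 0\<^sub>m q s"
    using Xc Xp by (simp add: orth_coeffs_diff frob_inner_self_eq_0 orth_coeffs_carrier minus_carrier_mat)
  then have diff: "Xp - Xc = 0\<^sub>m q s"
    using Xc Xp by (simp add: orth_coeffs_eq_0 minus_carrier_mat)
  show ?thesis
  proof (rule eq_matI)
    fix i j assume ij: "i < dim_row Xc" "j < dim_col Xc"
    then have "(Xp - Xc) $$ (i,j) = 0"
      using diff Xc by simp
    then show "Xp $$ (i,j) = Xc $$ (i,j)"
      using Xp Xc ij by simp
  qed (use Xp Xc in auto)
qed

lemma col_orth_coeffs_ring_0:
  assumes "X \<in> carrier_mat q s"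
  shows "col (orth_coeffs (ring X)) 0 = 0\<^sub>v q"
proof -
  have "col (ring X) 0 = 0\<^sub>v q"
    using assms s_pos by (intro eq_vecI) auto
  moreover have "col (orth_coeffs (ring X)) 0 = LS $$ (0,0) \<cdot>\<^sub>v (transpose_mat LY *\<^sub>v col (ring X) 0)"
    using assms LS LY s_pos unfolding orth_coeffs_def
    by (subst col_mult_upper_triangular_0[of _ s _ q]) auto
  moreover have "transpose_mat LY *\<^sub>v 0\<^sub>v q = 0\<^sub>v q"
    using LY by auto
  ultimately show ?thesis
    by auto
qed

lemma col_truncated_ring_0:
  assumes X: "X \<in> carrier_mat q s" and Vk: "Vk \<in> carrier_mat s k"
    and dich: "(\<forall>b<k. Vk $$ (0,b) = 0) \<or> orth_coeffs (ring X) * Vk * transpose_mat Vk = orth_coeffs (ring X)"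
  shows "col (ring X * LS * Vk * transpose_mat Vk) 0 = 0\<^sub>v q"
proof -
  note dims = carrier_matD[OF X] carrier_matD[OF LS(1)] carrier_matD[OF LY(1)] carrier_matD[OF Vk]
  define G where "G = ring X * LS * Vk * transpose_mat Vk"
  have G: "G \<in> carrier_mat q s"
    using dims by (intro carrier_matI) (simp_all add: G_def)
  show ?thesis
    using dich unfolding G_def[symmetric]
  proof
    assume "\<forall>b<k. Vk $$ (0,b) = 0"
    then have "col (transpose_mat Vk) 0 = 0\<^sub>v k"
      using Vk s_gt_0 by (intro eq_vecI) auto
    moreover have RLV: "ring X * LS * Vk \<in> carrier_mat q k"
      using dims by (intro carrier_matI) simp_all
    moreover have "col G 0 = (ring X * LS * Vk) *\<^sub>v col (transpose_mat Vk) 0"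
      using RLV Vk s_gt_0 unfolding G_def by (subst col_mult2[of _ q k _ s]) auto
    ultimately show "col G 0 = 0\<^sub>v q"
      by (simp add: mult_mat_vec_zero_vec)
  next
    assume exact: "orth_coeffs (ring X) * Vk * transpose_mat Vk = orth_coeffs (ring X)"
    have LY_G: "transpose_mat LY * G = orth_coeffs (ring X)"
      using dims exact by (simp add: G_def orth_coeffs_def assoc_mult_mat_dim del: assoc_mult_mat)
    have "transpose_mat LY *\<^sub>v col G 0 = col (transpose_mat LY * G) 0"
      using G LY s_gt_0 by (intro col_mult2[symmetric]) auto
    then have "transpose_mat LY *\<^sub>v col G 0 = col (orth_coeffs (ring X)) 0"
      unfolding LY_G .
    moreover have "col G 0 \<in> carrier_vec q"
      using G by (intro carrier_vecI) simp
    ultimately show "col G 0 = 0\<^sub>v q"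
      using transpose_LY_mult_vec_cancel col_orth_coeffs_ring_0[OF X] by simp
  qed
qed

lemma col_truncation_0:
  assumes X: "X \<in> carrier_mat q s" and Vk: "Vk \<in> carrier_mat s k"
    and dich: "(\<forall>b<k. Vk $$ (0,b) = 0) \<or> orth_coeffs (ring X) * Vk * transpose_mat Vk = orth_coeffs (ring X)"
  shows "col (ring X * LS * Vk * transpose_mat Vk * inv_m LS) 0 = 0\<^sub>v q"
proof -
  note inv = inv_m_inverse[OF LS(1,3)]
  define G where "G = ring X * LS * Vk * transpose_mat Vk"
  have G: "G \<in> carrier_mat q s"
    using carrier_matD[OF X] carrier_matD[OF LS(1)] carrier_matD[OF Vk]
    by (intro carrier_matI) (simp_all add: G_def)
  have "G * inv_m LS * LS = G"
    using G inv LS by simp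
  then show ?thesis
    using col_0_eq_0_if_col_mult_upper_triangular[OF LS(2,1) LS_00_neq_0 mult_carrier_mat[OF G inv(1)] s_gt_0]
      col_truncated_ring_0[OF assms, folded G_def]
    by (simp add: G_def)
qed

lemma orth_coeffs_truncation_residual:
  assumes X: "X \<in> carrier_mat q s" and Vk: "Vk \<in> carrier_mat s k"
  shows "orth_coeffs (ring X - ring X * LS * Vk * transpose_mat Vk * inv_m LS)
       = orth_coeffs (ring X) - orth_coeffs (ring X) * Vk * transpose_mat Vk"
proof -
  note inv = inv_m_inverse[OF LS(1,3)]
  note dims = carrier_matD[OF X] carrier_matD[OF LS(1)] carrier_matD[OF LY(1)] carrier_matD[OF Vk]
    carrier_matD[OF inv(1)]
  have M: "ring X * LS * Vk * transpose_mat Vk * inv_m LS \<in> carrier_mat q s"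
    using dims by (intro carrier_matI) simp_all
  have "orth_coeffs (ring X * LS * Vk * transpose_mat Vk * inv_m LS) = orth_coeffs (ring X) * Vk * transpose_mat Vk"
    using dims inv by (simp add: orth_coeffs_def assoc_mult_mat_dim del: assoc_mult_mat)
  then show ?thesis
    using ring_carrier[OF X] M by (simp add: orth_coeffs_diff)
qed

lemma frob_inner_truncation_residual_eq_0:
  assumes X: "X \<in> carrier_mat q s" and Vk: "Vk \<in> carrier_mat s k" "transpose_mat Vk * Vk = 1\<^sub>m k"
    and dich: "(\<forall>b<k. Vk $$ (0,b) = 0) \<or> orth_coeffs (ring X) * Vk * transpose_mat Vk = orth_coeffs (ring X)"
    and Y: "Y \<in> carrier_mat q s" "in_hatSY q (U_hat LS Vk) LS Y" "col Y 0 = 0\<^sub>v q"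
  shows "frob_inner (orth_coeffs (ring X - ring X * LS * Vk * transpose_mat Vk * inv_m LS)) (orth_coeffs Y) = 0"
proof -
  note dims = carrier_matD[OF LS(1)] carrier_matD[OF LY(1)] carrier_matD[OF Vk(1)] carrier_matD[OF Y(1)]
  define W where "W = orth_coeffs (ring X)"
  have W: "W \<in> carrier_mat q s"
    using orth_coeffs_carrier[OF ring_carrier[OF X]] by (simp add: W_def)
  have WQ: "W * Vk * transpose_mat Vk \<in> carrier_mat q s"
    using dims W by (intro carrier_matI) simp_all
  note res = orth_coeffs_truncation_residual[OF X Vk(1), folded W_def]
  show ?thesis
    using dich
  proof
    assume first_row: "\<forall>b<k. Vk $$ (0,b) = 0"
    obtain Z where Z: "Z \<in> carrier_mat q (Suc k)" "Y * LS = Z * transpose_mat (U_hat LS Vk)"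
      using in_hatSY_iff[OF LS(1) LS(3) U_hat_carrier[OF Vk(1)] Y(1)] Y(2) by blast
    have "(W - W * Vk * transpose_mat Vk) * Vk = W * Vk - W * Vk * transpose_mat Vk * Vk"
      using W WQ Vk by (intro minus_mult_distrib_mat) auto
    also have "W * Vk * transpose_mat Vk * Vk = W * Vk"
      using dims W Vk by (simp add: assoc_mult_mat_dim del: assoc_mult_mat)
    finally have EVk: "LY * (W - W * Vk * transpose_mat Vk) * Vk = 0\<^sub>m q k"
      using dims W WQ mult_carrier_mat[OF W Vk(1)] by (simp add: assoc_mult_mat_dim del: assoc_mult_mat)
    have E: "W - W * Vk * transpose_mat Vk \<in> carrier_mat q s"
      using WQ by (rule minus_carrier_mat)
    have "orth_coeffs Y = transpose_mat LY * (Y * LS)"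
      using dims by (simp add: orth_coeffs_def assoc_mult_mat_dim del: assoc_mult_mat)
    then have "frob_inner (orth_coeffs (ring X - ring X * LS * Vk * transpose_mat Vk * inv_m LS)) (orth_coeffs Y)
        = frob_inner (LY * (W - W * Vk * transpose_mat Vk)) (Y * LS)"
      using frob_inner_mult_left[OF E, of "transpose_mat LY" q "Y * LS"] LY Y LS by (simp add: res)
    also have "\<dots> = 0"
      using E LY by (intro frob_inner_eq_0_if_orth_U_hat[OF LS(1,2) LS_00_neq_0 s_gt_0 Vk(1) first_row _ EVk Y(1,3) Z])
        auto
    finally show ?thesis .
  next
    assume "orth_coeffs (ring X) * Vk * transpose_mat Vk = orth_coeffs (ring X)"
    then show ?thesis
      using W res by (simp add: W_def)
  qed
qed

lemma proj_hat_eq_truncation: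
  assumes X: "X \<in> carrier_mat q s" "init_ok \<Omega> q \<psi> \<nu> x0 X"
    and Vk: "Vk \<in> carrier_mat s k" "transpose_mat Vk * Vk = 1\<^sub>m k"
    and dich: "(\<forall>b<k. Vk $$ (0,b) = 0) \<or> orth_coeffs (ring X) * Vk * transpose_mat Vk = orth_coeffs (ring X)"
    and proj: "is_proj_hat T \<Omega> q \<psi> \<nu> x0 (U_hat LS Vk) LS X Xp"
  shows "Xp = X - ring X + ring X * LS * Vk * transpose_mat Vk * inv_m LS"
proof -
  define M where "M = ring X * LS * Vk * transpose_mat Vk * inv_m LS"
  define Xc where "Xc = X - ring X + M"
  have M: "M \<in> carrier_mat q s"
    using X(1) LS(1) Vk(1) inv_m_inverse(1)[OF LS(1,3)] by (intro carrier_matI) (simp_all add: M_def)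
  have M0: "col M 0 = 0\<^sub>v q"
    unfolding M_def by (rule col_truncation_0[OF X(1) Vk(1) dich])
  have Xc: "Xc \<in> carrier_mat q s"
    using X(1) M by (simp add: Xc_def minus_carrier_mat)
  have Xc_hat: "in_hatSY q (U_hat LS Vk) LS Xc"
    unfolding Xc_def M_def by (rule in_hatSY_truncation[OF X(1) LS(1,3) Vk(1) s_gt_0])
  have "col Xc 0 = col X 0"
    unfolding Xc_def by (rule col_minus_ring_plus_0[OF X(1) M M0 s_gt_0])
  then have Xc_init: "init_ok \<Omega> q \<psi> \<nu> x0 Xc"
    by (rule init_ok_if_col_0_eq[OF X Xc])
  have "Xp = Xc"
  proof (rule is_proj_hat_eqI[OF X(1) proj Xc Xc_hat Xc_init])
    fix Z assume Z: "Z \<in> carrier_mat q s" "in_hatSY q (U_hat LS Vk) LS Z" "init_ok \<Omega> q \<psi> \<nu> x0 Z"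
    have "X - Xc = ring X - M"
      using X(1) M by (intro eq_matI) (auto simp: Xc_def)
    moreover have "col (Z - Xc) 0 = 0\<^sub>v q"
      by (rule col_diff_init_ok_0[OF Z(1,3) Xc Xc_init])
    moreover have "in_hatSY q (U_hat LS Vk) LS (Z - Xc)"
      using Z(2) Xc_hat U_hat_carrier[OF Vk(1)] LS(1) by (rule in_hatSY_diff)
    ultimately show "st_inner T \<Omega> (stfun \<psi> \<nu> (X - Xc)) (stfun \<psi> \<nu> (Z - Xc)) = 0"
      using X(1) Xc Z(1) M frob_inner_truncation_residual_eq_0[OF X(1) Vk dich, of "Z - Xc", folded M_def]
      by (simp add: st_inner_orth_coeffs minus_carrier_mat)
  qed
  then show ?thesis
    by (simp add: Xc_def M_def)
qed

lemma ring_proj_hat_truncated_svd: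
  assumes X: "X \<in> carrier_mat q s" "init_ok \<Omega> q \<psi> \<nu> x0 X" and k: "k \<le> s"
    and svd: "is_svd (transpose_mat LY * ring X * LS) P Sig V"
    and proj: "is_proj_hat T \<Omega> q \<psi> \<nu> x0 (U_hat LS (lead_cols k V)) LS X Xp"
  shows "ring Xp = ring X * LS * lead_cols k V * transpose_mat (lead_cols k V) * inv_m LS"
proof -
  define Vk where "Vk = lead_cols k V"
  have W: "orth_coeffs (ring X) \<in> carrier_mat q s"
    using orth_coeffs_carrier[OF ring_carrier[OF X(1)]] .
  have V: "V \<in> carrier_mat s s" "orthonormal_cols V"
    using svd W unfolding is_svd_def orth_coeffs_def by auto
  have Vk: "Vk \<in> carrier_mat s k" "transpose_mat Vk * Vk = 1\<^sub>m k"
    using V k orthonormal_cols_lead_cols[OF V(2)] lead_cols_carrier[OF V(1)]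
    by (auto simp: Vk_def orthonormal_cols_def)
  have "(\<forall>b<k. V $$ (0,b) = 0) \<or> orth_coeffs (ring X) * Vk * transpose_mat Vk = orth_coeffs (ring X)"
    using svd_first_row_0_or_truncation_exact[OF svd[folded orth_coeffs_def] W col_orth_coeffs_ring_0[OF X(1)] k]
    by (simp add: Vk_def)
  then have dich: "(\<forall>b<k. Vk $$ (0,b) = 0) \<or> orth_coeffs (ring X) * Vk * transpose_mat Vk = orth_coeffs (ring X)"
    using V s_gt_0 by (auto simp: Vk_def)
  have M: "ring X * LS * Vk * transpose_mat Vk * inv_m LS \<in> carrier_mat q s"
    using X(1) LS(1) Vk(1) inv_m_inverse(1)[OF LS(1,3)] by (intro carrier_matI) simp_all
  have "Xp = X - ring X + ring X * LS * Vk * transpose_mat Vk * inv_m LS"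
    using proj_hat_eq_truncation[OF X Vk dich] proj by (simp add: Vk_def)
  then show ?thesis
    using ring_minus_ring_plus[OF X(1) M col_truncation_0[OF X(1) Vk(1) dich] s_gt_0] by (simp add: Vk_def)
qed

end

theorem lemma5:
  fixes T :: real and \<Omega> :: "'a::euclidean_space set"
    and s q sh :: nat
    and \<psi> :: "nat \<Rightarrow> real \<Rightarrow> real" and \<nu> :: "nat \<Rightarrow> 'a \<Rightarrow> real" and x0 :: "'a \<Rightarrow> real"
    and LS LY X Xp P Sig V :: "real mat"
  assumes T_pos: "T > 0"
    and dom: "open \<Omega>" "connected \<Omega>" "bounded \<Omega>" "\<Omega> \<noteq> {}"
    and psi_L2: "\<And>j. j < s \<Longrightarrow> set_borel_measurable lborel {0..T} (\<psi> j)
                     \<and> set_integrable lborel {0..T} (\<lambda>t. (\<psi> j t)\<^sup>2)"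
    and nu_L2: "\<And>i. i < q \<Longrightarrow> set_borel_measurable lborel \<Omega> (\<nu> i)
                     \<and> set_integrable lborel \<Omega> (\<lambda>y. (\<nu> i y)\<^sup>2)"
    and nu_basis: "\<And>c. (AE y in lborel. y \<in> \<Omega> \<longrightarrow> (\<Sum>i<q. c i * \<nu> i y) = 0) \<Longrightarrow> \<forall>i<q. c i = 0"
    and s_pos: "s \<ge> 1"
    and nodal: "\<psi> 0 0 = 1" "\<And>j. 0 < j \<Longrightarrow> j < s \<Longrightarrow> \<psi> j 0 = 0"
    and x0_L2: "set_borel_measurable lborel \<Omega> x0" "set_integrable lborel \<Omega> (\<lambda>y. (x0 y)\<^sup>2)"
    and LS: "LS \<in> carrier_mat s s" "upper_triangular LS" "invertible_mat LS"
            "gram_S T s \<psi> = LS * transpose_mat LS"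
    and LY: "LY \<in> carrier_mat q q" "gram_Y \<Omega> q \<nu> = LY * transpose_mat LY"
    and X: "X \<in> carrier_mat q s" "init_ok \<Omega> q \<psi> \<nu> x0 X"
    and sh: "2 \<le> sh" "sh - 1 \<le> s"
    and svd: "is_svd (transpose_mat LY * ring X * LS) P Sig V"
    and proj: "is_proj_hat T \<Omega> q \<psi> \<nu> x0 (U_hat LS (lead_cols (sh - 1) V)) LS X Xp"
  shows "ring Xp = ring X * LS * lead_cols (sh - 1) V * transpose_mat (lead_cols (sh - 1) V) * inv_m LS"
proof -
  interpret nodal_space_time T \<Omega> s q \<psi> \<nu> x0 LS LY
    using psi_L2 nu_L2 nu_basis s_pos nodal x0_L2 LS LY by unfold_locales auto
  show ?thesis
    using ring_proj_hat_truncated_svd[OF X sh(2) svd proj] .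
qed

end
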